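(* Let $\Omega$ be a finite ground set, let $(\Omega,\mathcal{I})$ be a matroid, let $f:2^\Omega\to\mathbb{R}$ be a normalized, monotone, submodular set function with $f(\{x\})>0$ for every $x\in\Omega$, and let $\nu$ be the curvature of $f$. Fix an integer $\alpha\ge 0$. Let $A^{\mathrm{sol}}$ be any output of the Myopic Maximization algorithm below (with arbitrary tie-breaking). Then $A^{\mathrm{sol}}\in\mathcal{I}$, and \[ \min_{B\subseteq A^{\mathrm{sol}},\ |B|\le\alpha} f(A^{\mathrm{sol}}\setminus B)\;\ge\;(1-\nu)\,\max_{A\in\mathcal{I}}\ \min_{B\subseteq A,\ |B|\le\alpha} f(A\setminus B). \]
   Context: A set function $f$ is normalized if $f(\emptyset)=0$, monotone if $f(X)\le f(Y)$ whenever $X\subseteq Y$, and submodular if $f(X\cup\{x\})-f(X)\ge f(Y\cup\{x\})-f(Y)$ for all $X\subseteq Y\subseteq\Omega$ and $x\in\Omega\setminus Y$. Write $f(x)$ for $f(\{x\})$. The curvature of $f$ is \[ \nu = 1-\min_{x\in\Omega}\frac{f(\Omega)-f(\Omega\setminus\{x\})}{f(x)}. \] The resilient submodular maximization problem is $\max_{A\in\mathcal{I}}\min_{B\subseteq A,\,|B|\le\alpha} f(A\setminus B)$. $\mathrm{rank}(\mathcal{I})$ denotes the common cardinality of the maximal independent sets (bases) of the matroid. Myopic Maximization algorithm: start with $A^{\mathrm{sol}}=\emptyset$; while $|A^{\mathrm{sol}}|<\mathrm{rank}(\mathcal{I})$, choose $a\in\arg\max\{ f(\{a\}) : a\in\Omega\setminus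 A^{\mathrm{sol}},\ A^{\mathrm{sol}}\cup\{a\}\in\mathcal{I}\}$ and set $A^{\mathrm{sol}}\gets A^{\mathrm{sol}}\cup\{a\}$; return $A^{\mathrm{sol}}$. *)

theory Defs
  imports Complex_Main
begin

definition matroid :: "'a set \<Rightarrow> 'a set set \<Rightarrow> bool" where
  "matroid \<Omega> \<I> \<longleftrightarrow> finite \<Omega> \<and> \<I> \<subseteq> Pow \<Omega> \<and> {} \<in> \<I>
     \<and> (\<forall>X Y. Y \<in> \<I> \<and> X \<subseteq> Y \<longrightarrow> X \<in> \<I>)
     \<and> (\<forall>X Y. X \<in> \<I> \<and> Y \<in> \<I> \<and> card X < card Y \<longrightarrow> (\<exists>y\<in>Y - X. insert y X \<in> \<I>))"

definition mrank :: "'a set set \<Rightarrow> nat" where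
  "mrank \<I> = Max (card ` \<I>)"

definition normalized :: "('a set \<Rightarrow> real) \<Rightarrow> bool" where
  "normalized f \<longleftrightarrow> f {} = 0"

definition monotone_sf :: "'a set \<Rightarrow> ('a set \<Rightarrow> real) \<Rightarrow> bool" where
  "monotone_sf \<Omega> f \<longleftrightarrow> (\<forall>X Y. X \<subseteq> Y \<and> Y \<subseteq> \<Omega> \<longrightarrow> f X \<le> f Y)"

definition submodular :: "'a set \<Rightarrow> ('a set \<Rightarrow> real) \<Rightarrow> bool" where
  "submodular \<Omega> f \<longleftrightarrow> (\<forall>X Y x. X \<subseteq> Y \<and> Y \<subseteq> \<Omega> \<and> x \<in> \<Omega> - Y \<longrightarrow>
      f (X \<union> {x}) - f X \<ge> f (Y \<union> {x}) - f Y)"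

definition curvature :: "'a set \<Rightarrow> ('a set \<Rightarrow> real) \<Rightarrow> real" where
  "curvature \<Omega> f = 1 - Min ((\<lambda>x. (f \<Omega> - f (\<Omega> - {x})) / f {x}) ` \<Omega>)"

definition resilient_value :: "('a set \<Rightarrow> real) \<Rightarrow> nat \<Rightarrow> 'a set \<Rightarrow> real" where
  "resilient_value f \<alpha> A = Min {f (A - B) | B. B \<subseteq> A \<and> card B \<le> \<alpha>}"

text \<open>States reachable by the Myopic Maximization loop (arbitrary tie-breaking).\<close>
inductive myopic_state :: "'a set \<Rightarrow> 'a set set \<Rightarrow> ('a set \<Rightarrow> real) \<Rightarrow> 'a set \<Rightarrow> bool"
  for \<Omega> \<I> f where
  start: "myopic_state \<Omega> \<I> f {}"
| step: "\<lbrakk> myopic_state \<Omega> \<I> f A; card A < mrank \<I>; a \<in> \<Omega> - A; insert a A \<in> \<I>;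
           \<forall>b \<in> \<Omega> - A. insert b A \<in> \<I> \<longrightarrow> f {b} \<le> f {a} \<rbrakk>
         \<Longrightarrow> myopic_state \<Omega> \<I> f (insert a A)"

definition myopic_output :: "'a set \<Rightarrow> 'a set set \<Rightarrow> ('a set \<Rightarrow> real) \<Rightarrow> 'a set \<Rightarrow> bool" where
  "myopic_output \<Omega> \<I> f A \<longleftrightarrow> myopic_state \<Omega> \<I> f A \<and> \<not> (card A < mrank \<I>)"

end

theory Submission
  imports Defs
begin

text \<open>Write \<open>w x = f {x}\<close>. By the matroid exchange property, for every threshold \<open>t\<close> the myopic
  solution contains at least as many elements of weight \<open>\<ge> t\<close> as any independent set \<open>A\<close>;
  hence \<open>A\<close> injects into \<open>A\<^sup>s\<^sup>o\<^sup>l\<close> by a weight-increasing map \<open>\<phi>\<close>. If the adversary removes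
  \<open>B\<close> from \<open>A\<^sup>s\<^sup>o\<^sup>l\<close>, removing \<open>\<phi>\<^sup>-\<^sup>1(B)\<close> from \<open>A\<close> gives, by subadditivity,
  \<open>res(A) \<le> \<Sum>\<^bsub>A-\<phi>\<^sup>-\<^sup>1(B)\<^esub> w \<le> \<Sum>\<^bsub>A\<^sup>s\<^sup>o\<^sup>l-B\<^esub> w\<close>, and the curvature bound
  \<open>(1 - \<nu>) \<Sum>\<^bsub>S\<^esub> w \<le> f S\<close> finishes the proof.\<close>

lemma matroidD:
  assumes "matroid \<Omega> \<I>"
  shows "finite \<Omega>" "\<I> \<subseteq> Pow \<Omega>" "{} \<in> \<I>"
    "\<And>X Y. Y \<in> \<I> \<Longrightarrow> X \<subseteq> Y \<Longrightarrow> X \<in> \<I>"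
    "\<And>X Y. X \<in> \<I> \<Longrightarrow> Y \<in> \<I> \<Longrightarrow> card X < card Y \<Longrightarrow> \<exists>y\<in>Y - X. insert y X \<in> \<I>"
  using assms unfolding matroid_def by blast+

lemma matroid_finite_indep:
  assumes "matroid \<Omega> \<I>"
  shows "finite \<I>"
  using matroidD(1,2)[OF assms] by (meson finite_Pow_iff finite_subset)

lemma matroid_indep_finite:
  assumes "matroid \<Omega> \<I>" "A \<in> \<I>"
  shows "finite A" "A \<subseteq> \<Omega>"
  using matroidD(1,2)[OF assms(1)] assms(2) by (auto intro: finite_subset)

lemma card_indep_le_mrank:
  assumes "matroid \<Omega> \<I>" "A \<in> \<I>"
  shows "card A \<le> mrank \<I>"
  unfolding mrank_def using matroid_finite_indep[OF assms(1)] assms(2) by simp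

lemma myopic_state_indep:
  assumes "myopic_state \<Omega> \<I> f G" "matroid \<Omega> \<I>"
  shows "G \<in> \<I>"
  using assms by induction (auto dest: matroidD(3))

lemma myopic_state_heavy_card_ge:
  assumes st: "myopic_state \<Omega> \<I> f G" and M: "matroid \<Omega> \<I>"
    and light: "x \<in> G" "f {x} < t"
    and S: "S \<in> \<I>" "\<forall>s\<in>S. t \<le> f {s}"
  shows "card S \<le> card {g\<in>G. t \<le> f {g}}"
  using st light
proof (induction arbitrary: x)
  case start
  then show ?case by simp
next
  case (step A a)
  have finA: "finite (insert a A)"
    using matroid_indep_finite(1)[OF M step.hyps(4)] .
  show ?case
  proof (cases "\<exists>y\<in>A. f {y} < t")
    case True
    then have "card S \<le> card {g\<in>A. t \<le> f {g}}" using step.IH by blast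
    also have "\<dots> \<le> card {g\<in>insert a A. t \<le> f {g}}"
      by (rule card_mono) (use finA in auto)
    finally show ?thesis .
  next
    case False
    then have light_a: "f {a} < t" using step.prems by auto
    with False have heavy_part: "{g\<in>insert a A. t \<le> f {g}} = A" by auto
    show ?thesis
    proof (rule ccontr)
      assume "\<not> ?thesis"
      then have "card A < card S" using heavy_part by simp
      then obtain y where y: "y \<in> S - A" "insert y A \<in> \<I>"
        using matroidD(5)[OF M myopic_state_indep[OF step.hyps(1) M] S(1)] by blast
      have "y \<in> \<Omega>" using matroidD(2)[OF M] S(1) y(1) by blast
      then have "f {y} \<le> f {a}" using step.hyps(5) y by blast
      with light_a S(2) y(1) show False by force
    qed
  qed
qed

lemma myopic_output_heavy_card_ge:
  assumes M: "matroid \<Omega> \<I>" and out: "myopic_output \<Omega> \<I> f Asol" and A: "A \<in> \<I>"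
  shows "card {a\<in>A. t \<le> f {a}} \<le> card {x\<in>Asol. t \<le> f {x}}"
proof -
  have st: "myopic_state \<Omega> \<I> f Asol" and full: "mrank \<I> \<le> card Asol"
    using out unfolding myopic_output_def by auto
  have heavy_indep: "{a\<in>A. t \<le> f {a}} \<in> \<I>" by (rule matroidD(4)[OF M A]) auto
  show ?thesis
  proof (cases "\<exists>x\<in>Asol. f {x} < t")
    case True
    then show ?thesis
      using myopic_state_heavy_card_ge[OF st M _ _ heavy_indep] by blast
  next
    case False
    then have "{x\<in>Asol. t \<le> f {x}} = Asol" by force
    then show ?thesis
      using card_indep_le_mrank[OF M heavy_indep] full by simp
  qed
qed

lemma finite_obtains_max_weight:
  fixes w :: "'a \<Rightarrow> 'b::linorder"
  assumes "finite A" "A \<noteq> {}"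
  obtains x where "x \<in> A" "\<forall>a\<in>A. w a \<le> w x"
proof -
  have "Max (w ` A) \<in> w ` A" using assms by simp
  then obtain x where "x \<in> A" "w x = Max (w ` A)" by auto
  then show ?thesis using that assms by simp
qed

lemma card_heavy_Diff_singleton:
  fixes w :: "'a \<Rightarrow> 'b::linorder"
  assumes "finite A" "a0 \<in> A" "t \<le> w a0"
  shows "card {a\<in>A - {a0}. t \<le> w a} = card {a\<in>A. t \<le> w a} - 1"
proof -
  have "{a\<in>A - {a0}. t \<le> w a} = {a\<in>A. t \<le> w a} - {a0}" by auto
  then show ?thesis using assms by (simp add: card_Diff_singleton)
qed

lemma exists_weight_increasing_injection:
  fixes w :: "'a \<Rightarrow> 'b::linorder"
  assumes "finite A" "finite G"
    and "\<And>t. card {a\<in>A. t \<le> w a} \<le> card {x\<in>G. t \<le> w x}"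
  shows "\<exists>\<phi>. inj_on \<phi> A \<and> \<phi> ` A \<subseteq> G \<and> (\<forall>a\<in>A. w a \<le> w (\<phi> a))"
  using assms
proof (induction "card A" arbitrary: A G rule: less_induct)
  case less
  show ?case
  proof (cases "A = {}")
    case True
    then show ?thesis by auto
  next
    case False
    \<comment> \<open>Match a heaviest element of \<open>A\<close> with a heaviest element of \<open>G\<close> and recurse.\<close>
    obtain a0 where a0: "a0 \<in> A" "\<forall>a\<in>A. w a \<le> w a0"
      using finite_obtains_max_weight[OF less.prems(1) False] by blast
    have "a0 \<in> {a\<in>A. w a0 \<le> w a}" using a0(1) by simp
    then have "card {a\<in>A. w a0 \<le> w a} \<noteq> 0" using less.prems(1) by auto
    then have "card {x\<in>G. w a0 \<le> w x} \<noteq> 0"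
      using less.prems(3)[of "w a0"] by linarith
    then obtain x0 where x0: "x0 \<in> G" "w a0 \<le> w x0"
      by (metis (no_types, lifting) card.empty empty_Collect_eq)
    obtain g0 where g0: "g0 \<in> G" "\<forall>x\<in>G. w x \<le> w g0"
      using finite_obtains_max_weight[OF less.prems(2)] x0(1) by blast
    have a0_g0: "w a0 \<le> w g0" using x0 g0(2) order_trans by blast
    have counts: "card {a\<in>A - {a0}. t \<le> w a} \<le> card {x\<in>G - {g0}. t \<le> w x}" for t
    proof (cases "t \<le> w a0")
      case True
      then show ?thesis
        using card_heavy_Diff_singleton[where w = w, OF less.prems(1) a0(1) True]
          card_heavy_Diff_singleton[where w = w, OF less.prems(2) g0(1) order_trans[OF True a0_g0]]
          less.prems(3)[of t] by simp
    next
      case False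
      then have "{a\<in>A - {a0}. t \<le> w a} = {}" using a0(2) order_trans by blast
      then show ?thesis by (simp only: card.empty le0)
    qed
    have "card (A - {a0}) < card A" using less.prems(1) a0(1) by (rule card_Diff1_less)
    then obtain \<phi> where \<phi>: "inj_on \<phi> (A - {a0})" "\<phi> ` (A - {a0}) \<subseteq> G - {g0}"
      "\<forall>a\<in>A - {a0}. w a \<le> w (\<phi> a)"
      using less.hyps[of "A - {a0}" "G - {g0}"] less.prems(1,2) counts by blast
    let ?\<psi> = "\<phi>(a0 := g0)"
    have "inj_on ?\<psi> A"
    proof -
      have "inj_on ?\<psi> (insert a0 (A - {a0}))"
        using \<phi>(1,2) by (auto simp: inj_on_def)
      then show ?thesis using a0(1) by (simp add: insert_absorb)
    qed
    moreover have "?\<psi> ` A \<subseteq> G" using \<phi>(2) g0(1) by auto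
    moreover have "\<forall>a\<in>A. w a \<le> w (?\<psi> a)" using \<phi>(3) a0_g0 by auto
    ultimately show ?thesis by blast
  qed
qed

lemma submodular_le_sum_singletons:
  assumes "finite \<Omega>" "normalized f" "submodular \<Omega> f" "S \<subseteq> \<Omega>"
  shows "f S \<le> (\<Sum>x\<in>S. f {x})"
proof -
  have "finite S" using assms(1,4) by (rule finite_subset[rotated])
  then show ?thesis using assms(4)
  proof (induction S rule: finite_induct)
    case empty
    then show ?case using assms(2) by (simp add: normalized_def)
  next
    case (insert x F)
    have "f (F \<union> {x}) - f F \<le> f ({} \<union> {x}) - f {}"
      using insert.prems insert.hyps(2)
      by (intro assms(3)[unfolded submodular_def, rule_format]) auto
    then show ?case using insert assms(2) by (simp add: normalized_def)
  qed
qed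

lemma curvature_marginal_bound:
  assumes "finite \<Omega>" "x \<in> \<Omega>" "f {x} > 0"
  shows "(1 - curvature \<Omega> f) * f {x} \<le> f \<Omega> - f (\<Omega> - {x})"
proof -
  have "1 - curvature \<Omega> f \<le> (f \<Omega> - f (\<Omega> - {x})) / f {x}"
    unfolding curvature_def using assms(1,2) by simp
  then show ?thesis using assms(3) by (simp add: le_divide_eq)
qed

lemma curvature_le_one:
  assumes "finite \<Omega>" "\<Omega> \<noteq> {}" "monotone_sf \<Omega> f" "\<forall>x\<in>\<Omega>. f {x} > 0"
  shows "0 \<le> 1 - curvature \<Omega> f"
proof -
  let ?R = "(\<lambda>x. (f \<Omega> - f (\<Omega> - {x})) / f {x}) ` \<Omega>"
  have "Min ?R \<in> ?R" using assms(1,2) by (intro Min_in) auto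
  then obtain x where x: "x \<in> \<Omega>" "Min ?R = (f \<Omega> - f (\<Omega> - {x})) / f {x}"
    by auto
  have "f (\<Omega> - {x}) \<le> f \<Omega>"
    using assms(3) unfolding monotone_sf_def by (meson Diff_subset order_refl)
  then have "0 \<le> Min ?R"
    unfolding x(2) using assms(4) x(1) by (intro divide_nonneg_pos) auto
  then show ?thesis unfolding curvature_def by linarith
qed

lemma curvature_sum_singletons_le:
  assumes fin: "finite \<Omega>" and "normalized f" and sub: "submodular \<Omega> f" and "S \<subseteq> \<Omega>"
    and pos: "\<forall>x\<in>\<Omega>. f {x} > 0"
  shows "(1 - curvature \<Omega> f) * (\<Sum>x\<in>S. f {x}) \<le> f S"
proof -
  have "finite S" using assms(1,4) by (rule finite_subset[rotated])
  then show ?thesis using assms(4)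
  proof (induction S rule: finite_induct)
    case empty
    then show ?case using assms(2) by (simp add: normalized_def)
  next
    case (insert x F)
    have x: "x \<in> \<Omega>" using insert.prems by auto
    have "f ((\<Omega> - {x}) \<union> {x}) - f (\<Omega> - {x}) \<le> f (F \<union> {x}) - f F"
      using insert.prems insert.hyps(2)
      by (intro sub[unfolded submodular_def, rule_format]) auto
    moreover have "(\<Omega> - {x}) \<union> {x} = \<Omega>" using x by auto
    ultimately have "(1 - curvature \<Omega> f) * f {x} \<le> f (insert x F) - f F"
      using curvature_marginal_bound[OF fin x] pos x by force
    then show ?case using insert by (simp add: distrib_left)
  qed
qed

lemma finite_resilient_candidates:
  assumes "finite A"
  shows "finite {f (A - B) | B. B \<subseteq> A \<and> card B \<le> \<alpha>}"
proof -
  have "{f (A - B) | B. B \<subseteq> A \<and> card B \<le> \<alpha>} \<subseteq> (\<lambda>B. f (A - B)) ` Pow A" by blast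
  then show ?thesis by (rule finite_subset) (simp add: assms)
qed

lemma resilient_value_attained:
  assumes "finite A"
  obtains B where "B \<subseteq> A" "card B \<le> \<alpha>" "resilient_value f \<alpha> A = f (A - B)"
proof -
  have "resilient_value f \<alpha> A \<in> {f (A - B) | B. B \<subseteq> A \<and> card B \<le> \<alpha>}"
    unfolding resilient_value_def
    by (rule Min_in[OF finite_resilient_candidates[OF assms]]) auto
  then show ?thesis using that by blast
qed

lemma resilient_value_le:
  assumes "finite A" "B \<subseteq> A" "card B \<le> \<alpha>"
  shows "resilient_value f \<alpha> A \<le> f (A - B)"
  unfolding resilient_value_def
  using finite_resilient_candidates[OF assms(1)] assms(2,3) by (intro Min_le) auto

lemma resilient_value_empty:
  assumes "normalized f"
  shows "resilient_value f \<alpha> {} = 0"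
proof -
  have "{f ({} - B) | B. B \<subseteq> {} \<and> card B \<le> \<alpha>} = {f {}}" by auto
  then show ?thesis using assms unfolding resilient_value_def normalized_def by simp
qed

lemma resilient_value_le_myopic_remainder:
  assumes fin: "finite \<Omega>" and M: "matroid \<Omega> \<I>"
    and nf: "normalized f" and sub: "submodular \<Omega> f" and pos: "\<forall>x\<in>\<Omega>. f {x} > 0"
    and out: "myopic_output \<Omega> \<I> f Asol" and A: "A \<in> \<I>"
    and B: "B \<subseteq> Asol" "card B \<le> \<alpha>"
  shows "resilient_value f \<alpha> A \<le> (\<Sum>x\<in>Asol - B. f {x})"
proof -
  have Asol: "Asol \<in> \<I>"
    using out myopic_state_indep[OF _ M] unfolding myopic_output_def by blast
  note finA = matroid_indep_finite[OF M A] and finAsol = matroid_indep_finite[OF M Asol]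
  obtain \<phi> where \<phi>: "inj_on \<phi> A" "\<phi> ` A \<subseteq> Asol" "\<forall>a\<in>A. f {a} \<le> f {\<phi> a}"
    using exists_weight_increasing_injection[OF finA(1) finAsol(1),
        OF myopic_output_heavy_card_ge[OF M out A]] by blast
  define B' where "B' = {a\<in>A. \<phi> a \<in> B}"
  have "card B' \<le> card B"
    using \<phi>(1) finite_subset[OF B(1) finAsol(1)]
    by (intro card_inj_on_le[of \<phi>]) (auto simp: B'_def intro: inj_on_subset)
  then have "resilient_value f \<alpha> A \<le> f (A - B')"
    using B(2) by (intro resilient_value_le[OF finA(1)]) (auto simp: B'_def)
  also have "\<dots> \<le> (\<Sum>x\<in>A - B'. f {x})"
    using finA(2) by (intro submodular_le_sum_singletons[OF fin nf sub]) auto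
  also have "\<dots> \<le> (\<Sum>x\<in>A - B'. f {\<phi> x})"
    using \<phi>(3) by (intro sum_mono) auto
  also have "\<dots> = (\<Sum>x\<in>\<phi> ` (A - B'). f {x})"
    using \<phi>(1) by (subst sum.reindex) (auto intro: inj_on_subset)
  also have "\<dots> \<le> (\<Sum>x\<in>Asol - B. f {x})"
    using \<phi>(2) finAsol pos by (intro sum_mono2) (auto simp: B'_def less_imp_le)
  finally show ?thesis .
qed

theorem mainTheorem1:
  fixes \<Omega> :: "'a set" and \<I> :: "'a set set" and f :: "'a set \<Rightarrow> real" and \<alpha> :: nat
    and Asol :: "'a set"
  assumes "finite \<Omega>"
    and "matroid \<Omega> \<I>"
    and "normalized f" and "monotone_sf \<Omega> f" and "submodular \<Omega> f"
    and "\<forall>x\<in>\<Omega>. f {x} > 0"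
    and "myopic_output \<Omega> \<I> f Asol"
  shows "Asol \<in> \<I> \<and>
         resilient_value f \<alpha> Asol \<ge> (1 - curvature \<Omega> f) * Max (resilient_value f \<alpha> ` \<I>)"
proof -
  have Asol: "Asol \<in> \<I>"
    using assms(2,7) myopic_state_indep unfolding myopic_output_def by blast
  obtain A where A: "A \<in> \<I>" "Max (resilient_value f \<alpha> ` \<I>) = resilient_value f \<alpha> A"
    using Max_in[of "resilient_value f \<alpha> ` \<I>"] matroid_finite_indep[OF assms(2)]
      matroidD(3)[OF assms(2)] by fastforce
  obtain B where B: "B \<subseteq> Asol" "card B \<le> \<alpha>" "resilient_value f \<alpha> Asol = f (Asol - B)"
    using resilient_value_attained matroid_indep_finite(1)[OF assms(2) Asol] by metis
  have "(1 - curvature \<Omega> f) * resilient_value f \<alpha> A \<le> resilient_value f \<alpha> Asol"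
  proof (cases "\<Omega> = {}")
    case True
    then have "A = {}" "Asol = {}"
      using matroid_indep_finite(2)[OF assms(2)] A(1) Asol by auto
    then show ?thesis using resilient_value_empty[OF assms(3)] by simp
  next
    case False
    have "(1 - curvature \<Omega> f) * resilient_value f \<alpha> A
        \<le> (1 - curvature \<Omega> f) * (\<Sum>x\<in>Asol - B. f {x})"
      using resilient_value_le_myopic_remainder[OF assms(1,2,3,5,6,7) A(1) B(1,2)]
        curvature_le_one[OF assms(1) False assms(4,6)] by (rule mult_left_mono)
    also have "\<dots> \<le> resilient_value f \<alpha> Asol"
      unfolding B(3) using matroid_indep_finite(2)[OF assms(2) Asol]
      by (intro curvature_sum_singletons_le[OF assms(1,3,5) _ assms(6)]) blast
    finally show ?thesis .
  qed
  then show ?thesis using Asol A(2) by simp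
qed

end
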